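(* For every resource $e$, every nonempty set $S\subseteq[N]$ of players and every permutation $\psi$ of $S$, $$\sum_{i\in S} f_{i,e}\big(S^i(\psi)\cup\{i\}\big)=\sum_{k=1}^{|S|}\Big(\frac{\sigma_e}{k}+\sum_{T\subseteq S,\,|T|=k}\frac{h_e(T)}{\binom{|S|}{k}\cdot k}\Big),$$ where $S^i(\psi)$ is the set of players preceding $i$ in $\psi$ and $f_{i,e}(X)$ denotes the Shapley cost share of player $i\in X$ on $e$ when the set of players using $e$ is $X$.
   Context: Players $i\in[N]$ have weights $w_i(e)\in\mathbb{Z}_{\ge1}$ on resource $e$. Resource $e$ has parameters $\sigma_e\ge0$, $\xi_{e,1},\dots,\xi_{e,q}\ge0$ (at least one positive) and exponents $\alpha_1,\dots,\alpha_q>1$; its cost function is $F_e(0)=0$, $F_e(l)=\sigma_e+\sum_j\xi_{e,j}l^{\alpha_j}$ for $l>0$. Define $h_e(X)=\sum_{j\in[q]}\xi_{e,j}\big(\sum_{i\in X}w_i(e)\big)^{\alpha_j}$ for $X\subseteq[N]$. The Shapley cost share of $i\in X$ on $e$ when $X$ is the set of users of $e$ is $f_{i,e}(X)=\mathbb{E}\big[F_e\big(\sum_{i'\in X^i(\pi)}w_{i'}(e)+w_i(e)\big)-F_e\big(\sum_{i'\in X^i(\pi)}w_{i'}(e)\big)\big]$, where $\pi$ is a uniformly random permutation of $X$ and $X^i(\pi)$ is the set of players preceding $i$ in $\pi$. *)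

theory Defs
  imports Complex_Main "HOL-Combinatorics.Multiset_Permutations"
begin

definition preceding :: "'a list \<Rightarrow> 'a \<Rightarrow> 'a set" where
  "preceding xs i = set (takeWhile (\<lambda>x. x \<noteq> i) xs)"

definition load :: "(nat \<Rightarrow> 'e \<Rightarrow> nat) \<Rightarrow> 'e \<Rightarrow> nat set \<Rightarrow> real" where
  "load w e X = real (\<Sum>i\<in>X. w i e)"

definition costF :: "nat \<Rightarrow> ('e \<Rightarrow> real) \<Rightarrow> ('e \<Rightarrow> nat \<Rightarrow> real) \<Rightarrow> (nat \<Rightarrow> real)
    \<Rightarrow> 'e \<Rightarrow> real \<Rightarrow> real" where
  "costF q \<sigma> \<xi> \<alpha> e l = (if l = 0 then 0 else \<sigma> e + (\<Sum>j\<in>{1..q}. \<xi> e j * l powr \<alpha> j))"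

definition hfun :: "nat \<Rightarrow> (nat \<Rightarrow> 'e \<Rightarrow> nat) \<Rightarrow> ('e \<Rightarrow> nat \<Rightarrow> real) \<Rightarrow> (nat \<Rightarrow> real)
    \<Rightarrow> 'e \<Rightarrow> nat set \<Rightarrow> real" where
  "hfun q w \<xi> \<alpha> e X = (\<Sum>j\<in>{1..q}. \<xi> e j * (load w e X) powr \<alpha> j)"

definition shapley :: "nat \<Rightarrow> (nat \<Rightarrow> 'e \<Rightarrow> nat) \<Rightarrow> ('e \<Rightarrow> real) \<Rightarrow> ('e \<Rightarrow> nat \<Rightarrow> real)
    \<Rightarrow> (nat \<Rightarrow> real) \<Rightarrow> nat \<Rightarrow> 'e \<Rightarrow> nat set \<Rightarrow> real" where
  "shapley q w \<sigma> \<xi> \<alpha> i e X =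
     (\<Sum>\<pi>\<in>permutations_of_set X.
        costF q \<sigma> \<xi> \<alpha> e (load w e (preceding \<pi> i) + real (w i e))
        - costF q \<sigma> \<xi> \<alpha> e (load w e (preceding \<pi> i)))
     / real (card (permutations_of_set X))"

end

theory Submission
  imports Defs
begin

text \<open>Shapley values are increments of the Hart--Mas-Colell potential: the sum over
  \<open>T \<subseteq> X\<close> of \<open>g(T) / (C(|X|,|T|) |T|)\<close>.  The potential \<open>P\<close> satisfies
  \<open>|X| P(X) = g(X) + \<Sum>y\<in>X. P(X - {y})\<close>, and splitting the permutations of \<open>X\<close> by
  their last element gives the matching recursion for the total marginal contribution of a
  player.  Hence the Shapley shares of the players
  along \<psi>, each taken among its predecessors, telescope to \<open>P(S)\<close>; grouping the subsets by
  size and using \<open>F\<^sub>e(load T) = \<sigma>\<^sub>e + h\<^sub>e(T)\<close> for nonempty \<open>T\<close> gives the formula.\<close>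

lemma preceding_snoc_self: "i \<notin> set xs \<Longrightarrow> preceding (xs @ [i]) i = set xs"
  unfolding preceding_def by (subst takeWhile_append2) auto

lemma preceding_snoc: "i \<in> set xs \<Longrightarrow> preceding (xs @ [y]) i = preceding xs i"
  unfolding preceding_def by (subst takeWhile_append1) auto

lemma not_in_preceding: "i \<notin> preceding xs i"
  unfolding preceding_def by (auto dest: set_takeWhileD)

lemma finite_preceding [simp]: "finite (preceding xs i)"
  unfolding preceding_def by simp

lemma sum_preceding_telescope:
  fixes F :: "'a set \<Rightarrow> 'b::ab_group_add"
  shows "distinct xs \<Longrightarrow>
    (\<Sum>i\<in>set xs. F (preceding xs i \<union> {i}) - F (preceding xs i)) = F (set xs) - F {}"
proof (induction xs rule: rev_induct)
  case (snoc y xs)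
  then have "y \<notin> set xs" by simp
  then show ?case
    using snoc by (simp add: preceding_snoc_self preceding_snoc add.commute cong: sum.cong)
qed simp

lemma permutations_of_set_snoc:
  "A \<noteq> {} \<Longrightarrow> permutations_of_set A =
     (\<Union>x\<in>A. (\<lambda>xs. xs @ [x]) ` permutations_of_set (A - {x}))"
proof -
  assume "A \<noteq> {}"
  have "permutations_of_set A = rev ` permutations_of_set A" by simp
  also have "\<dots> = (\<Union>x\<in>A. (\<lambda>xs. rev xs @ [x]) ` permutations_of_set (A - {x}))"
    using \<open>A \<noteq> {}\<close> by (subst permutations_of_set_nonempty) (auto simp: image_UN image_image)
  also have "\<dots> = (\<Union>x\<in>A. (\<lambda>xs. xs @ [x]) ` rev ` permutations_of_set (A - {x}))"
    by (simp only: image_image)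
  finally show ?thesis by simp
qed

lemma sum_permutations_of_set_snoc:
  assumes "finite A" "A \<noteq> {}"
  shows "(\<Sum>p\<in>permutations_of_set A. f p) =
    (\<Sum>x\<in>A. \<Sum>xs\<in>permutations_of_set (A - {x}). f (xs @ [x]))"
proof -
  have "(\<Sum>p\<in>permutations_of_set A. f p) =
      (\<Sum>x\<in>A. \<Sum>p\<in>(\<lambda>xs. xs @ [x]) ` permutations_of_set (A - {x}). f p)"
    unfolding permutations_of_set_snoc[OF assms(2)]
    by (rule sum.UNION_disjoint) (use assms in auto)
  also have "\<dots> = (\<Sum>x\<in>A. \<Sum>xs\<in>permutations_of_set (A - {x}). f (xs @ [x]))"
    by (rule sum.cong[OF refl], subst sum.reindex) (auto simp: inj_on_def)
  finally show ?thesis .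
qed

definition marginal_contributions :: "('a set \<Rightarrow> real) \<Rightarrow> 'a \<Rightarrow> 'a set \<Rightarrow> real" where
  "marginal_contributions g i X =
     (\<Sum>p\<in>permutations_of_set X. g (preceding p i \<union> {i}) - g (preceding p i))"

lemma marginal_contributions_rec:
  assumes "finite X" "i \<in> X"
  shows "marginal_contributions g i X =
    fact (card X - 1) * (g X - g (X - {i})) + (\<Sum>y\<in>X - {i}. marginal_contributions g i (X - {y}))"
proof -
  have last_i: "g (preceding (xs @ [i]) i \<union> {i}) - g (preceding (xs @ [i]) i) = g X - g (X - {i})"
    if "xs \<in> permutations_of_set (X - {i})" for xs
    using that assms by (auto simp: preceding_snoc_self insert_absorb dest: permutations_of_setD)
  have last_y: "g (preceding (xs @ [y]) i \<union> {i}) - g (preceding (xs @ [y]) i) =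
      g (preceding xs i \<union> {i}) - g (preceding xs i)"
    if "y \<in> X - {i}" "xs \<in> permutations_of_set (X - {y})" for y xs
    using that assms by (auto simp: preceding_snoc dest: permutations_of_setD)
  have "marginal_contributions g i X = (\<Sum>y\<in>X. \<Sum>xs\<in>permutations_of_set (X - {y}).
      g (preceding (xs @ [y]) i \<union> {i}) - g (preceding (xs @ [y]) i))"
    unfolding marginal_contributions_def using assms by (intro sum_permutations_of_set_snoc) auto
  also have "\<dots> = (\<Sum>xs\<in>permutations_of_set (X - {i}). g X - g (X - {i}))
      + (\<Sum>y\<in>X - {i}. marginal_contributions g i (X - {y}))"
    unfolding marginal_contributions_def
    by (subst sum.remove[OF assms]) (intro arg_cong2[where f="(+)"] sum.cong refl last_i last_y)
  finally show ?thesis using assms by simp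
qed

definition potential :: "('a set \<Rightarrow> real) \<Rightarrow> 'a set \<Rightarrow> real" where
  "potential g X = (\<Sum>T\<in>Pow X. g T / (real (card X choose card T) * real (card T)))"

text \<open>The summand for \<open>T = {}\<close> vanishes through division by zero, whatever \<open>g {}\<close> is.\<close>

lemma potential_empty [simp]: "potential g {} = 0"
  unfolding potential_def by simp

lemma potential_by_card:
  assumes "finite X"
  shows "potential g X = (\<Sum>k = 1..card X.
    \<Sum>T\<in>{T. T \<subseteq> X \<and> card T = k}. g T / (real (card X choose k) * real k))"
proof -
  have "potential g X = (\<Sum>k\<in>{0..card X}.
      \<Sum>T\<in>{T\<in>Pow X. card T = k}. g T / (real (card X choose card T) * real (card T)))"
    unfolding potential_def using assms by (intro sum.group[symmetric]) (auto intro: card_mono)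
  also have "\<dots> = (\<Sum>k\<in>{0..card X}.
      \<Sum>T\<in>{T. T \<subseteq> X \<and> card T = k}. g T / (real (card X choose k) * real k))"
    by (intro sum.cong) auto
  also have "\<dots> = (\<Sum>k = 1..card X.
      \<Sum>T\<in>{T. T \<subseteq> X \<and> card T = k}. g T / (real (card X choose k) * real k))"
    by (simp add: sum.atLeast_Suc_atMost)
  finally show ?thesis .
qed

lemma sum_Pow_Diff_singleton:
  assumes "finite Y"
  shows "(\<Sum>y\<in>Y. \<Sum>T\<in>Pow (Y - {y}). f T) = (\<Sum>T\<in>Pow Y. of_nat (card (Y - T)) * f T)"
proof -
  have "(\<Sum>y\<in>Y. \<Sum>T\<in>Pow (Y - {y}). f T) = (\<Sum>y\<in>Y. \<Sum>T\<in>{T\<in>Pow Y. y \<notin> T}. f T)"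
    by (intro sum.cong) auto
  also have "\<dots> = (\<Sum>T\<in>Pow Y. \<Sum>y\<in>{y\<in>Y. y \<notin> T}. f T)"
    by (rule sum.swap_restrict) (use assms in auto)
  also have "\<dots> = (\<Sum>T\<in>Pow Y. of_nat (card (Y - T)) * f T)"
    by (simp add: set_diff_eq)
  finally show ?thesis .
qed

lemma binomial_weight_shift:
  assumes "k < n"
  shows "real n / (real (n choose k) * real k) = real (n - k) / (real ((n - 1) choose k) * real k)"
proof -
  have "real (n - k) * real (n choose k) = real n * real ((n - 1) choose k)"
    using binomial_absorb_comp[of n k] by (metis of_nat_mult)
  then show ?thesis using assms by (cases "k = 0") (simp_all add: frac_eq_eq mult.assoc)
qed

lemma potential_rec:
  assumes "finite Y" "g {} = 0"
  shows "real (card Y) * potential g Y = g Y + (\<Sum>y\<in>Y. potential g (Y - {y}))"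
proof -
  define n where "n = card Y"
  have summand: "real n * (g T / (real (n choose card T) * real (card T))) =
      (if T = Y then g Y else 0)
      + real (card (Y - T)) * (g T / (real ((n - 1) choose card T) * real (card T)))"
    if "T \<subseteq> Y" for T
  proof (cases "T = Y")
    case True
    then show ?thesis using assms by (cases "n = 0") (simp_all add: n_def)
  next
    case False
    with that assms have "card T < n" "card (Y - T) = n - card T"
      by (auto simp: n_def psubset_card_mono card_Diff_subset finite_subset)
    then have "real n * (g T / (real (n choose card T) * real (card T))) =
        real (card (Y - T)) * (g T / (real ((n - 1) choose card T) * real (card T)))"
      using binomial_weight_shift[of "card T" n] by (metis times_divide_eq_right mult.commute)
    then show ?thesis using False by simp
  qed
  have "real n * potential g Y = (\<Sum>T\<in>Pow Y. (if T = Y then g Y else 0)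
      + real (card (Y - T)) * (g T / (real ((n - 1) choose card T) * real (card T))))"
    unfolding potential_def n_def[symmetric] sum_distrib_left by (intro sum.cong refl summand) simp
  also have "\<dots> = g Y
      + (\<Sum>T\<in>Pow Y. real (card (Y - T)) * (g T / (real ((n - 1) choose card T) * real (card T))))"
    using assms by (simp add: sum.distrib)
  also have "\<dots> = g Y + (\<Sum>y\<in>Y. potential g (Y - {y}))"
    unfolding potential_def using assms
    by (simp add: sum_Pow_Diff_singleton n_def card_Diff_singleton cong: sum.cong)
  finally show ?thesis by (simp add: n_def)
qed

lemma marginal_contributions_eq_potential_diff:
  assumes "finite X" "i \<in> X" "g {} = 0"
  shows "marginal_contributions g i X = fact (card X) * (potential g X - potential g (X - {i}))"
  using assms
proof (induction "card X" arbitrary: X)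
  case (Suc m X)
  let ?P = "potential g"
  have card_X: "card X = Suc m" using Suc.hyps(2) by simp
  have IH: "marginal_contributions g i (X - {y}) = fact m * (?P (X - {y}) - ?P (X - {i} - {y}))"
    if "y \<in> X - {i}" for y
  proof -
    have "X - {y} - {i} = X - {i} - {y}" by blast
    then show ?thesis using Suc.hyps(1)[of "X - {y}"] that Suc.prems card_X by auto
  qed
  have rec_X: "real (Suc m) * ?P X = g X + ?P (X - {i}) + (\<Sum>y\<in>X - {i}. ?P (X - {y}))"
    using potential_rec[of X g] Suc.prems card_X by (simp add: sum.remove[of X i])
  have rec_Xi: "real m * ?P (X - {i}) = g (X - {i}) + (\<Sum>y\<in>X - {i}. ?P (X - {i} - {y}))"
    using potential_rec[of "X - {i}" g] Suc.prems card_X by simp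
  have "marginal_contributions g i X = fact m * (g X - g (X - {i})
      + (\<Sum>y\<in>X - {i}. ?P (X - {y})) - (\<Sum>y\<in>X - {i}. ?P (X - {i} - {y})))"
    using marginal_contributions_rec[of X i g] Suc.prems card_X IH
    by (simp add: sum_subtractf sum_distrib_left[symmetric] algebra_simps)
  also have "\<dots> = fact m * (real (Suc m) * (?P X - ?P (X - {i})))"
  proof -
    have "real (Suc m) * (?P X - ?P (X - {i})) =
        real (Suc m) * ?P X - ?P (X - {i}) - real m * ?P (X - {i})"
      by (simp add: algebra_simps)
    then show ?thesis using rec_X rec_Xi by simp
  qed
  also have "\<dots> = fact (Suc m) * (?P X - ?P (X - {i}))"
    by simp
  finally show ?case using card_X by simp
qed simp

lemma shapley_eq_marginal_contributions:
  assumes "finite X"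
  shows "shapley q w \<sigma> \<xi> \<alpha> i e X =
    marginal_contributions (\<lambda>T. costF q \<sigma> \<xi> \<alpha> e (load w e T)) i X / fact (card X)"
proof -
  have "load w e (preceding p i \<union> {i}) = load w e (preceding p i) + real (w i e)" for p
    using not_in_preceding[of i p] by (simp add: load_def)
  then show ?thesis
    using assms by (simp add: shapley_def marginal_contributions_def)
qed

lemma shapley_eq_potential_diff:
  assumes "finite X" "i \<in> X"
  shows "shapley q w \<sigma> \<xi> \<alpha> i e X =
    potential (\<lambda>T. costF q \<sigma> \<xi> \<alpha> e (load w e T)) X
    - potential (\<lambda>T. costF q \<sigma> \<xi> \<alpha> e (load w e T)) (X - {i})"
proof -
  have "costF q \<sigma> \<xi> \<alpha> e (load w e {}) = 0" by (simp add: load_def costF_def)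
  then show ?thesis
    using assms
    by (simp add: shapley_eq_marginal_contributions marginal_contributions_eq_potential_diff)
qed

lemma costF_load_eq:
  "load w e T \<noteq> 0 \<Longrightarrow> costF q \<sigma> \<xi> \<alpha> e (load w e T) = \<sigma> e + hfun q w \<xi> \<alpha> e T"
  by (simp add: costF_def hfun_def)

lemma load_pos:
  assumes "finite T" "T \<noteq> {}" "\<And>i. i \<in> T \<Longrightarrow> w i e \<ge> 1"
  shows "load w e T > 0"
proof -
  obtain i where "i \<in> T" using assms(2) by blast
  then have "w i e \<le> (\<Sum>j\<in>T. w j e)" by (simp add: sum.remove[OF assms(1)])
  then show ?thesis using assms(3)[OF \<open>i \<in> T\<close>] unfolding load_def by (simp del: of_nat_sum)
qed

theorem lemma7p1:
  fixes N q :: nat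
    and w :: "nat \<Rightarrow> 'e \<Rightarrow> nat"
    and \<sigma> :: "'e \<Rightarrow> real"
    and \<xi> :: "'e \<Rightarrow> nat \<Rightarrow> real"
    and \<alpha> :: "nat \<Rightarrow> real"
    and e :: 'e
    and S :: "nat set"
    and \<psi> :: "nat list"
  assumes w_pos: "\<And>i e'. i \<in> {1..N} \<Longrightarrow> w i e' \<ge> 1"
    and \<sigma>_nn: "\<And>e'. \<sigma> e' \<ge> 0"
    and \<xi>_nn: "\<And>e' j. j \<in> {1..q} \<Longrightarrow> \<xi> e' j \<ge> 0"
    and \<xi>_pos: "\<And>e'. \<exists>j\<in>{1..q}. \<xi> e' j > 0"
    and \<alpha>_gt1: "\<And>j. j \<in> {1..q} \<Longrightarrow> \<alpha> j > 1"
    and S_sub: "S \<subseteq> {1..N}"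
    and S_ne: "S \<noteq> {}"
    and \<psi>_perm: "\<psi> \<in> permutations_of_set S"
  shows "(\<Sum>i\<in>S. shapley q w \<sigma> \<xi> \<alpha> i e (preceding \<psi> i \<union> {i}))
       = (\<Sum>k=1..card S. \<sigma> e / real k
            + (\<Sum>T\<in>{T. T \<subseteq> S \<and> card T = k}.
                 hfun q w \<xi> \<alpha> e T / (real (card S choose k) * real k)))"
proof -
  define g where "g = (\<lambda>T. costF q \<sigma> \<xi> \<alpha> e (load w e T))"
  have fin_S: "finite S" using S_sub finite_subset by blast
  have \<psi>: "distinct \<psi>" "set \<psi> = S" using \<psi>_perm by (auto dest: permutations_of_setD)
  have "shapley q w \<sigma> \<xi> \<alpha> i e (preceding \<psi> i \<union> {i}) =
      potential g (preceding \<psi> i \<union> {i}) - potential g (preceding \<psi> i)" for i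
    using shapley_eq_potential_diff[of "preceding \<psi> i \<union> {i}" i] not_in_preceding[of i \<psi>]
    by (simp add: g_def insert_Diff_if)
  then have "(\<Sum>i\<in>S. shapley q w \<sigma> \<xi> \<alpha> i e (preceding \<psi> i \<union> {i})) = potential g S"
    using sum_preceding_telescope[OF \<psi>(1), of "potential g"] \<psi>(2) by simp
  also have "\<dots> = (\<Sum>k = 1..card S. \<Sum>T\<in>{T. T \<subseteq> S \<and> card T = k}.
      (\<sigma> e + hfun q w \<xi> \<alpha> e T) / (real (card S choose k) * real k))"
  proof -
    have g_nonempty: "g T = \<sigma> e + hfun q w \<xi> \<alpha> e T" if "T \<subseteq> S" "card T \<ge> 1" for T
    proof -
      have "load w e T > 0"
        using that fin_S S_sub w_pos by (intro load_pos) (auto simp: finite_subset)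
      then show ?thesis by (simp add: g_def costF_load_eq)
    qed
    then show ?thesis
      unfolding potential_by_card[OF fin_S] by (intro sum.cong refl) (simp add: g_nonempty)
  qed
  also have "\<dots> = (\<Sum>k = 1..card S. \<sigma> e / real k + (\<Sum>T\<in>{T. T \<subseteq> S \<and> card T = k}.
      hfun q w \<xi> \<alpha> e T / (real (card S choose k) * real k)))"
    using fin_S by (simp add: add_divide_distrib sum.distrib n_subsets)
  finally show ?thesis .
qed

end
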